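(* Let $n,m$ be positive integers. If both $n$ and $m$ are even, then $\chi'_{m\Sigma}(K_{n,m})=4$ if $n=m=2$, $\chi'_{m\Sigma}(K_{n,m})=3$ if $n=m\ge 4$, and $\chi'_{m\Sigma}(K_{n,m})=2$ if $n\ne m$. If at least one of $n,m$ is odd and $n,m\ge 2$, then $\chi'_{m\Sigma}(K_{n,m})=5$ if $n=m=3$, $\chi'_{m\Sigma}(K_{n,m})=4$ if $n=m=5$, and $\chi'_{m\Sigma}(K_{n,m})=3$ otherwise.
   Context: A $k$-edge-coloring of $G$ is any map $c:E(G)\to\{1,\dots,k\}$ (adjacent edges may share colors). It induces $\sigma_c(v)=\sum_{u\in N(v)}c(vu)$. The coloring is neighbor sum distinguishing (NSD) if $\sigma_c(u)\ne\sigma_c(v)$ for every edge $uv$. It is majority if every vertex $v$ is incident to at most $d(v)/2$ edges of each single color. $\chi'_{m\Sigma}(G)$ denotes the least $k$ such that $G$ has a $k$-edge-coloring that is both majority and NSD. *)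

theory Defs
  imports Main
begin

text \<open>A finite simple graph is given by a vertex set V and a symmetric irreflexive
edge relation E (only edges between vertices of V matter). An edge colouring is
represented by a symmetric function c on pairs of adjacent vertices.\<close>

definition nbrs :: "'a set \<Rightarrow> ('a \<Rightarrow> 'a \<Rightarrow> bool) \<Rightarrow> 'a \<Rightarrow> 'a set" where
  "nbrs V E v = {u \<in> V. E v u}"

definition deg :: "'a set \<Rightarrow> ('a \<Rightarrow> 'a \<Rightarrow> bool) \<Rightarrow> 'a \<Rightarrow> nat" where
  "deg V E v = card (nbrs V E v)"

definition is_k_edge_coloring ::
  "'a set \<Rightarrow> ('a \<Rightarrow> 'a \<Rightarrow> bool) \<Rightarrow> nat \<Rightarrow> ('a \<Rightarrow> 'a \<Rightarrow> nat) \<Rightarrow> bool" where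
  "is_k_edge_coloring V E k c \<longleftrightarrow>
     (\<forall>u\<in>V. \<forall>v\<in>V. E u v \<longrightarrow> c u v \<in> {1..k} \<and> c u v = c v u)"

definition sigma_c :: "'a set \<Rightarrow> ('a \<Rightarrow> 'a \<Rightarrow> bool) \<Rightarrow> ('a \<Rightarrow> 'a \<Rightarrow> nat) \<Rightarrow> 'a \<Rightarrow> nat" where
  "sigma_c V E c v = (\<Sum>u\<in>nbrs V E v. c v u)"

definition is_nsd :: "'a set \<Rightarrow> ('a \<Rightarrow> 'a \<Rightarrow> bool) \<Rightarrow> ('a \<Rightarrow> 'a \<Rightarrow> nat) \<Rightarrow> bool" where
  "is_nsd V E c \<longleftrightarrow> (\<forall>u\<in>V. \<forall>v\<in>V. E u v \<longrightarrow> sigma_c V E c u \<noteq> sigma_c V E c v)"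

definition is_majority :: "'a set \<Rightarrow> ('a \<Rightarrow> 'a \<Rightarrow> bool) \<Rightarrow> ('a \<Rightarrow> 'a \<Rightarrow> nat) \<Rightarrow> bool" where
  "is_majority V E c \<longleftrightarrow>
     (\<forall>v\<in>V. \<forall>a. 2 * card {u \<in> nbrs V E v. c v u = a} \<le> deg V E v)"

definition chi_mSigma :: "'a set \<Rightarrow> ('a \<Rightarrow> 'a \<Rightarrow> bool) \<Rightarrow> nat" where
  "chi_mSigma V E = (LEAST k. \<exists>c. is_k_edge_coloring V E k c \<and> is_majority V E c \<and> is_nsd V E c)"

definition Knm_V :: "nat \<Rightarrow> nat \<Rightarrow> (nat + nat) set" where
  "Knm_V n m = Inl ` {..<n} \<union> Inr ` {..<m}"

fun Knm_E :: "nat + nat \<Rightarrow> nat + nat \<Rightarrow> bool" where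
  "Knm_E (Inl _) (Inr _) = True"
| "Knm_E (Inr _) (Inl _) = True"
| "Knm_E _ _ = False"

end

theory Submission
  imports Defs "HOL-Library.Multiset"
begin

(*
A colouring of K_{n,m} is an n x m matrix; majority bounds the multiplicity of each value in a
row or column by half its length, and NSD separates row sums from column sums.

One colour violates majority. With two colours a line of length L must hold
L/2 ones and L/2 twos, so it sums to 3L/2: both sides are even, and a square has equal row
and column sums. To exclude k = 3, 4, 3 colours on the squares of side n = 2, 3, 5, note
that n + 1 = k b and n <= 2b + 1, so every line contains each colour at most b times and
hence misses exactly one colour exactly once. If the first row misses colour t, double counting
gives a column that also misses t; the two lines carry the same multiset of colours and so
have the same sum.

Upper bounds are explicit matrices: (i + j) mod p + 1 for p = 2, 3; pairs of complementary
rows c and 4 - c when an even side faces an odd side of almost the same length; block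
matrices for the larger squares; and four small matrices checked by evaluation.
*)

section \<open>Functions on an initial segment as multisets\<close>

definition line_mset :: "nat \<Rightarrow> (nat \<Rightarrow> 'a) \<Rightarrow> 'a multiset" where
  "line_mset L f = image_mset f (mset_set {..<L})"

lemma line_mset_0 [simp]: "line_mset 0 f = {#}"
  by (simp add: line_mset_def)

lemma line_mset_Suc [simp]: "line_mset (Suc L) f = add_mset (f L) (line_mset L f)"
  by (simp add: line_mset_def lessThan_Suc)

lemma line_mset_Suc_shift: "line_mset (Suc L) f = add_mset (f 0) (line_mset L (\<lambda>j. f (Suc j)))"
  by (induction L) simp_all

lemma size_line_mset [simp]: "size (line_mset L f) = L"
  by (simp add: line_mset_def)

lemma set_mset_line_mset [simp]: "set_mset (line_mset L f) = f ` {..<L}"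
  by (simp add: line_mset_def)

lemma sum_mset_line_mset: "sum_mset (line_mset L f) = (\<Sum>j<L. f j)"
  by (simp add: line_mset_def sum_unfold_sum_mset)

lemma count_line_mset: "count (line_mset L f) a = card {j. j < L \<and> f j = a}"
proof -
  have "{j. j < L \<and> f j = a} = f -` {a} \<inter> {..<L}" by auto
  then show ?thesis by (simp add: line_mset_def count_image_mset)
qed

lemma count_line_mset_eq_sum: "count (line_mset L f) a = (\<Sum>j<L. if f j = a then 1 else 0)"
  by (induction L) simp_all

lemma line_mset_eq_mset_map: "line_mset L f = mset (map f [0..<L])"
  by (induction L) simp_all

lemma count_line_mset_list: "count (line_mset L f) a = count_list (map f [0..<L]) a"
  by (simp only: line_mset_eq_mset_map count_mset)

lemma sum_mset_line_mset_list: "sum_mset (line_mset L f) = sum_list (map f [0..<L])"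
  by (simp only: line_mset_eq_mset_map sum_mset_sum_list)

lemma line_mset_cong: "(\<And>j. j < L \<Longrightarrow> f j = g j) \<Longrightarrow> line_mset L f = line_mset L g"
  by (induction L) simp_all

lemma line_mset_comp: "line_mset L (g \<circ> f) = image_mset g (line_mset L f)"
  by (induction L) simp_all

lemma line_mset_add: "line_mset (L + K) f = line_mset L f + line_mset K (\<lambda>j. f (L + j))"
  by (induction K) simp_all

lemma line_mset_add_Suc:
  "line_mset (p + Suc q) f = line_mset p f + add_mset (f p) (line_mset q (\<lambda>j. f (Suc p + j)))"
  by (subst line_mset_add, subst line_mset_Suc_shift) simp

lemma less_add_cases:
  fixes i p q :: nat
  assumes "i < p + q" "i < p \<Longrightarrow> P i" "\<And>i'. i' < q \<Longrightarrow> P (p + i')"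
  shows "P i"
  using assms(1,2) assms(3)[of "i - p"] by (cases "i < p") auto

lemma less_add_Suc_cases:
  fixes i p q :: nat
  assumes "i < p + Suc q" "i < p \<Longrightarrow> P i" "P p" "\<And>i'. i' < q \<Longrightarrow> P (Suc p + i')"
  shows "P i"
proof (cases "i \<le> p")
  case True
  then show ?thesis using assms(2,3) by (auto simp: le_less)
next
  case False
  then have "Suc p + (i - Suc p) = i" "i - Suc p < q" using assms(1) by simp_all
  then show ?thesis using assms(4) by metis
qed

lemma line_mset_pairs: "line_mset (2 * h) f = (\<Sum>t<h. {#f (2 * t), f (2 * t + 1)#})"
  by (induction h) (simp_all add: add_mset_commute)

lemma line_mset_const: "(\<And>j. j < L \<Longrightarrow> f j = c) \<Longrightarrow> line_mset L f = replicate_mset L c"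
  by (induction L) simp_all

lemma line_mset_update:
  assumes "x < L"
  shows "line_mset L (f(x := d)) = add_mset d (line_mset L f - {#f x#})"
proof -
  have split: "line_mset L g = add_mset (g x) (image_mset g (mset_set ({..<L} - {x})))" for g :: "nat \<Rightarrow> 'a"
    using assms by (simp add: line_mset_def mset_set.remove[of "{..<L}" x])
  have "image_mset (f(x := d)) (mset_set ({..<L} - {x})) = image_mset f (mset_set ({..<L} - {x}))"
    by (rule image_mset_cong) simp
  then show ?thesis using split[of f] split[of "f(x := d)"] by simp
qed

lemma line_mset_point:
  assumes "x < L" "\<And>j. j < L \<Longrightarrow> f j = (if j = x then d else c)"
  shows "line_mset L f = add_mset d (replicate_mset (L - 1) c)"
proof -
  have "line_mset L f = line_mset L ((\<lambda>_. c)(x := d))"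
    by (rule line_mset_cong) (simp add: assms(2))
  also have "\<dots> = add_mset d (replicate_mset (L - 1) c)"
    using assms(1) by (cases L) (simp_all add: line_mset_update line_mset_const)
  finally show ?thesis .
qed

lemma line_mset_periodic:
  assumes "\<And>j. f (p + j) = f j"
  shows "line_mset (p * q + r) f = repeat_mset q (line_mset p f) + line_mset r f"
proof (induction q)
  case (Suc q)
  have "line_mset (p * Suc q + r) f = line_mset p f + line_mset (p * q + r) (\<lambda>j. f (p + j))"
    by (simp add: line_mset_add flip: add.assoc)
  then show ?case by (simp add: assms Suc.IH)
qed simp

lemma line_mset_periodic_shift:
  assumes "\<And>j. f (p + j) = f j"
  shows "line_mset p (\<lambda>j. f (s + j)) = line_mset p f"
proof (induction s)
  case (Suc s)
  have "add_mset (f (s + p)) (line_mset p (\<lambda>j. f (s + j))) = add_mset (f s) (line_mset p (\<lambda>j. f (Suc s + j)))"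
    using line_mset_Suc[of p "\<lambda>j. f (s + j)"] line_mset_Suc_shift[of p "\<lambda>j. f (s + j)"] by simp
  moreover have "f (s + p) = f s"
    using assms[of s] by (simp add: add.commute)
  ultimately show ?case
    using Suc.IH by simp
qed simp

definition majority_mset :: "'a multiset \<Rightarrow> bool" where
  "majority_mset A \<longleftrightarrow> (\<forall>x. 2 * count A x \<le> size A)"

lemma size_eq_sum_count:
  "set_mset A \<subseteq> S \<Longrightarrow> finite S \<Longrightarrow> size A = (\<Sum>x\<in>S. count A x)"
proof (induction A)
  case (add a A)
  have "count (add_mset a A) x = count A x + (if a = x then 1 else 0)" for x
    by simp
  with add show ?case by (simp add: sum.distrib)
qed simp

lemma sum_mset_eq_sum_count:
  fixes A :: "nat multiset"
  shows "set_mset A \<subseteq> S \<Longrightarrow> finite S \<Longrightarrow> sum_mset A = (\<Sum>x\<in>S. count A x * x)"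
proof (induction A)
  case (add a A)
  have "count (add_mset a A) x * x = count A x * x + (if a = x then x else 0)" for x
    by simp
  with add show ?case by (simp add: sum.distrib)
qed simp

lemma majority_mset_iff_colours:
  "set_mset A \<subseteq> S \<Longrightarrow> majority_mset A \<longleftrightarrow> (\<forall>x\<in>S. 2 * count A x \<le> size A)"
  by (auto simp: majority_mset_def) (metis count_eq_zero_iff subsetD mult_0_right zero_le)

lemma majority_two_colours:
  fixes A :: "nat multiset"
  assumes "set_mset A \<subseteq> {1, 2}" "majority_mset A"
  shows "2 * sum_mset A = 3 * size A"
proof -
  have "size A = count A 1 + count A 2" "sum_mset A = count A 1 + 2 * count A 2"
    using size_eq_sum_count[OF assms(1)] sum_mset_eq_sum_count[OF assms(1)] by simp_all
  moreover have "2 * count A 1 \<le> size A" "2 * count A 2 \<le> size A"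
    using assms(2) by (simp_all add: majority_mset_def)
  ultimately show ?thesis by linarith
qed

lemma sum_mset_three_colours:
  fixes A :: "nat multiset"
  assumes "set_mset A \<subseteq> {1, 2, 3}"
  shows "sum_mset A + count A 1 = 2 * size A + count A 3"
  using size_eq_sum_count[OF assms] sum_mset_eq_sum_count[OF assms] by simp

lemma ex_deficient_colour:
  assumes "set_mset A \<subseteq> {1..k}" "size A + 1 = k * b" "\<And>x. count A x \<le> b"
  obtains t where "t \<in> {1..k}" "count A t < b"
proof -
  have "\<exists>t\<in>{1..k}. count A t < b"
  proof (rule ccontr)
    assume "\<not> ?thesis"
    then have "\<forall>t\<in>{1..k}. count A t = b" using assms(3) by (meson le_antisym not_le)
    then show False using size_eq_sum_count[OF assms(1)] assms(2) by simp
  qed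
  then show ?thesis using that by blast
qed

lemma count_deficient:
  assumes "set_mset A \<subseteq> {1..k}" "size A + 1 = k * b" "\<And>x. count A x \<le> b"
    and "t \<in> {1..k}" "count A t < b"
  shows "count A x = (if x \<in> {1..k} then if x = t then b - 1 else b else 0)"
proof -
  define g where "g x = (if x = t then b - 1 else b)" for x
  have le: "count A x \<le> g x" for x
    using assms(3,5) by (auto simp: g_def)
  have "(\<Sum>x\<in>{1..k}. g x) = g t + (\<Sum>x\<in>{1..k} - {t}. b)"
    using assms(4) by (simp add: sum.remove g_def)
  then have "(\<Sum>x\<in>{1..k}. g x) = (\<Sum>x\<in>{1..k}. count A x)"
    using assms(2,4,5) size_eq_sum_count[OF assms(1)] by (cases k) (auto simp: g_def algebra_simps)
  then have "count A x = g x" if "x \<in> {1..k}" for x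
    using sum_mono_inv[of "count A" "{1..k}" g] le that by (metis finite_atLeastAtMost)
  moreover have "count A x = 0" if "x \<notin> {1..k}" for x
    using assms(1) that by (meson count_eq_zero_iff subsetD)
  ultimately show ?thesis by (simp add: g_def)
qed

lemma deficient_mset_eq:
  assumes "set_mset A \<subseteq> {1..k}" "size A + 1 = k * b" "\<And>x. count A x \<le> b"
    and "set_mset B \<subseteq> {1..k}" "size B + 1 = k * b" "\<And>x. count B x \<le> b"
    and "t \<in> {1..k}" "count A t < b" "count B t < b"
  shows "A = B"
  using count_deficient[OF assms(1-3,7,8)] count_deficient[OF assms(4-6,7,9)]
  by (simp add: multiset_eqI)

section \<open>Colourings of complete bipartite graphs as matrices\<close>

(* Row i and column j stand for the vertices Inl i and Inr j, M i j for the colour of their edge. *)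

definition majority_nsd_matrix :: "nat \<Rightarrow> nat \<Rightarrow> nat \<Rightarrow> (nat \<Rightarrow> nat \<Rightarrow> nat) \<Rightarrow> bool" where
  "majority_nsd_matrix k n m M \<longleftrightarrow>
     (\<forall>i<n. \<forall>j<m. M i j \<in> {1..k}) \<and>
     (\<forall>i<n. majority_mset (line_mset m (M i))) \<and>
     (\<forall>j<m. majority_mset (line_mset n (\<lambda>i. M i j))) \<and>
     (\<forall>i<n. \<forall>j<m. (\<Sum>j'<m. M i j') \<noteq> (\<Sum>i'<n. M i' j))"

lemma majority_nsd_matrix_transpose: "majority_nsd_matrix k n m M \<Longrightarrow> majority_nsd_matrix k m n (\<lambda>i j. M j i)"
  unfolding majority_nsd_matrix_def by metis

lemma majority_nsd_matrix_mono: "majority_nsd_matrix k n m M \<Longrightarrow> k \<le> k' \<Longrightarrow> majority_nsd_matrix k' n m M"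
  unfolding majority_nsd_matrix_def atLeastAtMost_iff by (meson order_trans)

lemma majority_nsd_matrixI:
  assumes "\<And>i. i < n \<Longrightarrow> set_mset (line_mset m (M i)) \<subseteq> {1..k} \<and> majority_mset (line_mset m (M i))"
    and "\<And>j. j < m \<Longrightarrow> majority_mset (line_mset n (\<lambda>i. M i j))"
    and "\<And>i j. i < n \<Longrightarrow> j < m \<Longrightarrow>
           sum_mset (line_mset m (M i)) \<noteq> sum_mset (line_mset n (\<lambda>i. M i j))"
  shows "majority_nsd_matrix k n m M"
  using assms by (auto simp: majority_nsd_matrix_def sum_mset_line_mset image_subset_iff)

lemma majority_nsd_matrix_symmetricI:
  assumes "\<And>i j. M i j = M j i"
    and "\<And>L i. L \<in> {n, m} \<Longrightarrow> set_mset (line_mset L (M i)) \<subseteq> {1..k} \<and> majority_mset (line_mset L (M i))"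
    and "\<And>i j. i < n \<Longrightarrow> j < m \<Longrightarrow> sum_mset (line_mset m (M i)) \<noteq> sum_mset (line_mset n (M j))"
  shows "majority_nsd_matrix k n m M"
proof -
  have "(\<lambda>i. M i j) = M j" for j using assms(1) by auto
  then show ?thesis using assms(2,3) by (intro majority_nsd_matrixI) auto
qed

lemma majority_nsd_matrix_rowD:
  assumes "majority_nsd_matrix k n m M" "i < n"
  shows "set_mset (line_mset m (M i)) \<subseteq> {1..k}" "majority_mset (line_mset m (M i))"
  using assms by (auto simp: majority_nsd_matrix_def)

lemma majority_nsd_matrix_colD:
  assumes "majority_nsd_matrix k n m M" "j < m"
  shows "set_mset (line_mset n (\<lambda>i. M i j)) \<subseteq> {1..k}" "majority_mset (line_mset n (\<lambda>i. M i j))"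
  using majority_nsd_matrix_rowD[OF majority_nsd_matrix_transpose[OF assms(1)] assms(2)] by simp_all

lemma majority_nsd_matrix_nsdD:
  "majority_nsd_matrix k n m M \<Longrightarrow> i < n \<Longrightarrow> j < m \<Longrightarrow>
     sum_mset (line_mset m (M i)) \<noteq> sum_mset (line_mset n (\<lambda>i. M i j))"
  by (simp add: majority_nsd_matrix_def sum_mset_line_mset)

lemma ball_Knm_V: "(\<forall>v\<in>Knm_V n m. P v) \<longleftrightarrow> (\<forall>i<n. P (Inl i)) \<and> (\<forall>j<m. P (Inr j))"
  by (auto simp: Knm_V_def)

lemma nbrs_Knm_Inl: "nbrs (Knm_V n m) Knm_E (Inl i) = Inr ` {..<m}"
  by (auto simp: nbrs_def Knm_V_def)

lemma nbrs_Knm_Inr: "nbrs (Knm_V n m) Knm_E (Inr j) = Inl ` {..<n}"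
  by (auto simp: nbrs_def Knm_V_def)

lemma sigma_c_Knm_Inl: "sigma_c (Knm_V n m) Knm_E c (Inl i) = (\<Sum>j<m. c (Inl i) (Inr j))"
  by (simp add: sigma_c_def nbrs_Knm_Inl sum.reindex)

lemma sigma_c_Knm_Inr: "sigma_c (Knm_V n m) Knm_E c (Inr j) = (\<Sum>i<n. c (Inr j) (Inl i))"
  by (simp add: sigma_c_def nbrs_Knm_Inr sum.reindex)

lemma card_image_filter: "inj f \<Longrightarrow> card {u \<in> f ` A. P u} = card {x \<in> A. P (f x)}"
proof -
  assume "inj f"
  moreover have "{u \<in> f ` A. P u} = f ` {x \<in> A. P (f x)}" by auto
  ultimately show ?thesis by (simp add: card_image inj_on_subset)
qed

lemma k_edge_coloring_Knm_iff:
  "is_k_edge_coloring (Knm_V n m) Knm_E k c \<longleftrightarrow>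
     (\<forall>i<n. \<forall>j<m. c (Inl i) (Inr j) \<in> {1..k} \<and> c (Inr j) (Inl i) = c (Inl i) (Inr j))"
  by (auto simp: is_k_edge_coloring_def ball_Knm_V)

lemma majority_Knm_iff:
  "is_majority (Knm_V n m) Knm_E c \<longleftrightarrow>
     (\<forall>i<n. majority_mset (line_mset m (\<lambda>j. c (Inl i) (Inr j)))) \<and>
     (\<forall>j<m. majority_mset (line_mset n (\<lambda>i. c (Inr j) (Inl i))))"
  by (simp add: is_majority_def majority_mset_def deg_def ball_Knm_V nbrs_Knm_Inl nbrs_Knm_Inr
      card_image_filter card_image count_line_mset)

lemma nsd_Knm_iff:
  "is_nsd (Knm_V n m) Knm_E c \<longleftrightarrow>
     (\<forall>i<n. \<forall>j<m. (\<Sum>j'<m. c (Inl i) (Inr j')) \<noteq> (\<Sum>i'<n. c (Inr j) (Inl i')))"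
  by (auto simp: is_nsd_def ball_Knm_V sigma_c_Knm_Inl sigma_c_Knm_Inr) (metis (no_types))

lemma ex_coloring_Knm_iff_majority_nsd_matrix:
  "(\<exists>c. is_k_edge_coloring (Knm_V n m) Knm_E k c \<and> is_majority (Knm_V n m) Knm_E c \<and>
        is_nsd (Knm_V n m) Knm_E c) \<longleftrightarrow> (\<exists>M. majority_nsd_matrix k n m M)"
proof
  assume "\<exists>c. is_k_edge_coloring (Knm_V n m) Knm_E k c \<and> is_majority (Knm_V n m) Knm_E c \<and>
        is_nsd (Knm_V n m) Knm_E c"
  then obtain c where c: "is_k_edge_coloring (Knm_V n m) Knm_E k c"
    "is_majority (Knm_V n m) Knm_E c" "is_nsd (Knm_V n m) Knm_E c" by blast
  have sym: "c (Inr j) (Inl i) = c (Inl i) (Inr j)" if "i < n" "j < m" for i j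
    using c(1) that by (simp add: k_edge_coloring_Knm_iff)
  have "line_mset n (\<lambda>i. c (Inr j) (Inl i)) = line_mset n (\<lambda>i. c (Inl i) (Inr j))"
    and "(\<Sum>i<n. c (Inr j) (Inl i)) = (\<Sum>i<n. c (Inl i) (Inr j))" if "j < m" for j
    using sym that by (auto intro: line_mset_cong sum.cong)
  then have "majority_nsd_matrix k n m (\<lambda>i j. c (Inl i) (Inr j))"
    using c by (simp add: majority_nsd_matrix_def k_edge_coloring_Knm_iff majority_Knm_iff nsd_Knm_iff)
  then show "\<exists>M. majority_nsd_matrix k n m M" by blast
next
  assume "\<exists>M. majority_nsd_matrix k n m M"
  then obtain M where M: "majority_nsd_matrix k n m M" ..
  define c where "c u v = (case (u, v) of (Inl i, Inr j) \<Rightarrow> M i j | (Inr j, Inl i) \<Rightarrow> M i j | _ \<Rightarrow> 0)"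
    for u v
  have "c (Inl i) (Inr j) = M i j" "c (Inr j) (Inl i) = M i j" for i j
    by (simp_all add: c_def)
  then have "is_k_edge_coloring (Knm_V n m) Knm_E k c \<and> is_majority (Knm_V n m) Knm_E c \<and>
        is_nsd (Knm_V n m) Knm_E c"
    using M by (simp add: majority_nsd_matrix_def k_edge_coloring_Knm_iff majority_Knm_iff nsd_Knm_iff)
  then show "\<exists>c. is_k_edge_coloring (Knm_V n m) Knm_E k c \<and> is_majority (Knm_V n m) Knm_E c \<and>
        is_nsd (Knm_V n m) Knm_E c" by blast
qed

lemma chi_mSigma_Knm_eqI:
  assumes "majority_nsd_matrix k n m M" "\<And>M. \<not> majority_nsd_matrix (k - 1) n m M" "0 < k"
  shows "chi_mSigma (Knm_V n m) Knm_E = k"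
  unfolding chi_mSigma_def ex_coloring_Knm_iff_majority_nsd_matrix
proof (rule Least_equality)
  show "\<exists>M. majority_nsd_matrix k n m M" using assms(1) by blast
  show "k \<le> k'" if "\<exists>M. majority_nsd_matrix k' n m M" for k'
  proof (rule ccontr)
    assume "\<not> k \<le> k'"
    then show False
      using that assms(2) majority_nsd_matrix_mono[of k' n m _ "k - 1"] by fastforce
  qed
qed

section \<open>Lower bounds\<close>

lemma no_majority_nsd_matrix_1:
  assumes "0 < n" "0 < m"
  shows "\<not> majority_nsd_matrix 1 n m M"
proof
  assume M: "majority_nsd_matrix 1 n m M"
  then have "line_mset m (M 0) = replicate_mset m 1"
    using assms(1) by (intro line_mset_const) (auto simp: majority_nsd_matrix_def)
  moreover have "2 * count (line_mset m (M 0)) 1 \<le> m"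
    using majority_nsd_matrix_rowD(2)[OF M assms(1)] by (simp add: majority_mset_def)
  ultimately show False
    using assms(2) by simp
qed

lemma majority_nsd_matrix_2_row_sum:
  assumes "majority_nsd_matrix 2 n m M" "i < n"
  shows "2 * sum_mset (line_mset m (M i)) = 3 * m"
proof -
  have "{1..2::nat} = {1, 2}" by auto
  then show ?thesis
    using majority_two_colours majority_nsd_matrix_rowD[OF assms] by fastforce
qed

lemma majority_nsd_matrix_2_dims:
  assumes "majority_nsd_matrix 2 n m M" "0 < n" "0 < m"
  shows "even n \<and> even m \<and> n \<noteq> m"
proof -
  have row: "2 * sum_mset (line_mset m (M 0)) = 3 * m"
    using majority_nsd_matrix_2_row_sum[OF assms(1,2)] .
  have col: "2 * sum_mset (line_mset n (\<lambda>i. M i 0)) = 3 * n"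
    using majority_nsd_matrix_2_row_sum[OF majority_nsd_matrix_transpose[OF assms(1)] assms(3)] by simp
  have "sum_mset (line_mset m (M 0)) \<noteq> sum_mset (line_mset n (\<lambda>i. M i 0))"
    using majority_nsd_matrix_nsdD[OF assms] .
  then show ?thesis using row col by presburger
qed

lemma sum_count_rows_eq_cols:
  "(\<Sum>i<n. count (line_mset m (M i)) a) = (\<Sum>j<m. count (line_mset n (\<lambda>i. M i j)) a)"
  unfolding count_line_mset_eq_sum by (rule sum.swap)

lemma no_majority_nsd_matrix_deficient:
  assumes "0 < n" "n + 1 = k * b" "n \<le> 2 * b + 1"
  shows "\<not> majority_nsd_matrix k n n M"
proof
  assume M: "majority_nsd_matrix k n n M"
  have bounded: "count A x \<le> b" if "majority_mset A" "size A = n" for A :: "nat multiset" and x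
  proof -
    have "2 * count A x \<le> n" using that by (simp add: majority_mset_def)
    then show ?thesis using assms(3) by linarith
  qed
  have row: "count (line_mset n (M i)) x \<le> b" if "i < n" for i x
    using bounded majority_nsd_matrix_rowD(2)[OF M that] by simp
  have col: "count (line_mset n (\<lambda>i. M i j)) x \<le> b" if "j < n" for j x
    using bounded majority_nsd_matrix_colD(2)[OF M that] by simp
  have size: "size (line_mset n f) + 1 = k * b" for f :: "nat \<Rightarrow> nat"
    using assms(2) by simp
  obtain t where t: "t \<in> {1..k}" "count (line_mset n (M 0)) t < b"
    by (rule ex_deficient_colour[OF majority_nsd_matrix_rowD(1)[OF M assms(1)] size row[OF assms(1)]])
  have "(\<Sum>i<n. count (line_mset n (M i)) t) < (\<Sum>i<n. b)"
    by (rule sum_strict_mono_ex1) (use t assms(1) row in auto)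
  then have "(\<Sum>j<n. count (line_mset n (\<lambda>i. M i j)) t) < (\<Sum>j<n. b)"
    by (metis sum_count_rows_eq_cols)
  then obtain j where j: "j < n" "count (line_mset n (\<lambda>i. M i j)) t < b"
    by (meson lessThan_iff not_le sum_mono)
  have "line_mset n (M 0) = line_mset n (\<lambda>i. M i j)"
    by (rule deficient_mset_eq[OF majority_nsd_matrix_rowD(1)[OF M assms(1)] size row[OF assms(1)]
          majority_nsd_matrix_colD(1)[OF M j(1)] size col[OF j(1)] t j(2)])
  then show False
    using majority_nsd_matrix_nsdD[OF M assms(1) j(1)] by simp
qed

section \<open>Constructions\<close>

definition cyclic_matrix :: "nat \<Rightarrow> nat \<Rightarrow> nat \<Rightarrow> nat" where
  "cyclic_matrix p i j = (i + j) mod p + 1"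

lemma cyclic_matrix_commute: "cyclic_matrix p i j = cyclic_matrix p j i"
  by (simp add: cyclic_matrix_def add.commute)

lemma cyclic_matrix_periodic: "cyclic_matrix p i (p + j) = cyclic_matrix p i j"
  by (simp add: cyclic_matrix_def add.left_commute[of i p j])

lemma line_mset_cyclic_period:
  assumes "0 < p"
  shows "line_mset p (cyclic_matrix p i) = mset_set {1..p}"
proof -
  have "line_mset p (cyclic_matrix p i) = line_mset p (\<lambda>j. cyclic_matrix p 0 (i + j))"
    by (simp add: cyclic_matrix_def[abs_def])
  also have "\<dots> = line_mset p (cyclic_matrix p 0)"
    by (rule line_mset_periodic_shift) (rule cyclic_matrix_periodic)
  also have "\<dots> = line_mset p Suc"
    by (rule line_mset_cong) (simp add: cyclic_matrix_def)
  also have "\<dots> = mset_set {1..p}"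
    by (simp add: line_mset_def image_mset_mset_set image_Suc_lessThan)
  finally show ?thesis .
qed

lemma count_cyclic_line:
  assumes "0 < p" "a \<in> {1..p}"
  shows "L < p * (count (line_mset L (cyclic_matrix p i)) a + 1)"
    and "p * count (line_mset L (cyclic_matrix p i)) a < L + p"
proof -
  define f where "f = cyclic_matrix p i"
  define q r where "q = L div p" and "r = L mod p"
  have L: "L = p * q + r" and r: "r < p" using assms(1) by (simp_all add: q_def r_def)
  have period: "count (line_mset p f) a = 1"
    using line_mset_cyclic_period[OF assms(1)] assms(2) by (simp add: f_def)
  have "line_mset p f = line_mset r f + line_mset (p - r) (\<lambda>j. f (r + j))"
    using r by (simp flip: line_mset_add)
  then have rest: "count (line_mset r f) a \<le> 1"
    using period by (metis count_union le_add1)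
  have "count (line_mset L f) a = q + count (line_mset r f) a"
    unfolding L using line_mset_periodic[of f p q r] period by (simp add: f_def cyclic_matrix_periodic)
  then have "count (line_mset L f) a = q \<or> count (line_mset L f) a = q + 1 \<and> 0 < r"
    using rest by (cases "r = 0") (auto simp: le_Suc_eq)
  moreover have "L < p * (c + 1) \<and> p * c < L + p" if "c = q \<or> c = q + 1 \<and> 0 < r" for c
    using that r unfolding L by (auto simp: algebra_simps)
  ultimately show "L < p * (count (line_mset L (cyclic_matrix p i)) a + 1)"
    and "p * count (line_mset L (cyclic_matrix p i)) a < L + p"
    unfolding f_def by blast+
qed

lemma set_mset_cyclic_line: "0 < p \<Longrightarrow> set_mset (line_mset L (cyclic_matrix p i)) \<subseteq> {1..p}"
  by (auto simp: cyclic_matrix_def Suc_le_eq)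

lemma cyclic_line_2:
  assumes "even L"
  shows "majority_mset (line_mset L (cyclic_matrix 2 i))"
    and "2 * sum_mset (line_mset L (cyclic_matrix 2 i)) = 3 * L"
proof -
  let ?A = "line_mset L (cyclic_matrix 2 i)"
  have colours: "set_mset ?A \<subseteq> {1, 2}"
    using set_mset_cyclic_line[of 2 L i] by auto
  have half: "2 * count ?A a = L" if "a \<in> {1, 2}" for a
    using count_cyclic_line[of 2 a L i] that assms by auto
  show "majority_mset ?A"
    using colours half by (simp add: majority_mset_iff_colours)
  show "2 * sum_mset ?A = 3 * L"
    using sum_mset_eq_sum_count[OF colours] half by simp
qed

lemma cyclic_line_3:
  assumes "2 \<le> L"
  shows "majority_mset (line_mset L (cyclic_matrix 3 i))"
    and "2 * L \<le> sum_mset (line_mset L (cyclic_matrix 3 i)) + 1"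
    and "sum_mset (line_mset L (cyclic_matrix 3 i)) \<le> 2 * L + 1"
proof -
  let ?A = "line_mset L (cyclic_matrix 3 i)"
  have colours: "set_mset ?A \<subseteq> {1, 2, 3}"
    using set_mset_cyclic_line[of 3 L i] by auto
  have third: "L < 3 * (count ?A a + 1)" "3 * count ?A a < L + 3" if "a \<in> {1, 2, 3}" for a
    using count_cyclic_line[of 3 a L i] that by auto
  have "2 * c \<le> L" if "3 * c < L + 3" for c
    using that assms by presburger
  then show "majority_mset ?A"
    using colours third(2) by (simp add: majority_mset_iff_colours)
  show "2 * L \<le> sum_mset ?A + 1" "sum_mset ?A \<le> 2 * L + 1"
    using sum_mset_three_colours[OF colours] third[of 1] third[of 3] by simp_all
qed

lemma majority_nsd_matrix_cyclic_2:
  assumes "even n" "even m" "n \<noteq> m"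
  shows "majority_nsd_matrix 2 n m (cyclic_matrix 2)"
proof (rule majority_nsd_matrix_symmetricI)
  show "set_mset (line_mset L (cyclic_matrix 2 i)) \<subseteq> {1..2} \<and> majority_mset (line_mset L (cyclic_matrix 2 i))"
    if "L \<in> {n, m}" for L i
    using that assms set_mset_cyclic_line[of 2 L i] cyclic_line_2(1)[of L i] by auto
  show "sum_mset (line_mset m (cyclic_matrix 2 i)) \<noteq> sum_mset (line_mset n (cyclic_matrix 2 j))" for i j
    using cyclic_line_2(2)[of m i] cyclic_line_2(2)[of n j] assms by auto
qed (rule cyclic_matrix_commute)

lemma majority_nsd_matrix_cyclic_3:
  assumes "2 \<le> n" "2 \<le> m" "n + 2 \<le> m \<or> m + 2 \<le> n"
  shows "majority_nsd_matrix 3 n m (cyclic_matrix 3)"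
proof (rule majority_nsd_matrix_symmetricI)
  show "set_mset (line_mset L (cyclic_matrix 3 i)) \<subseteq> {1..3} \<and> majority_mset (line_mset L (cyclic_matrix 3 i))"
    if "L \<in> {n, m}" for L i
    using that assms set_mset_cyclic_line[of 3 L i] cyclic_line_3(1)[of L i] by auto
  show "sum_mset (line_mset m (cyclic_matrix 3 i)) \<noteq> sum_mset (line_mset n (cyclic_matrix 3 j))" for i j
    using cyclic_line_3(2,3)[of m i] cyclic_line_3(2,3)[of n j] assms by linarith
qed (rule cyclic_matrix_commute)

definition paired_row :: "nat \<Rightarrow> nat \<Rightarrow> nat" where
  "paired_row t = (\<lambda>j. 2 * (j mod 2) + 1)(2 * t := 2)"

(* Rows 2t and 2t+1 are complementary (c and 4 - c), so a column of length 2h sums to 4h,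
   while a row of length 2q+1 has a single 2 amid alternating 1s and 3s and sums to 4q + 2. *)

definition paired_matrix :: "nat \<Rightarrow> nat \<Rightarrow> nat" where
  "paired_matrix i j = (if even i then paired_row (i div 2) j else 4 - paired_row (i div 2) j)"

lemma paired_row_cases: "paired_row t j = (if j = 2 * t then 2 else if even j then 1 else 3)"
  by (auto simp: paired_row_def odd_iff_mod_2_eq_one)

lemma line_mset_paired_row:
  assumes "t \<le> q"
  shows "line_mset (2 * q + 1) (paired_row t) = add_mset 2 (repeat_mset q {#1, 3#})"
proof -
  define g :: "nat \<Rightarrow> nat" where "g j = 2 * (j mod 2) + 1" for j
  have "g (2 + j) = g j" for j by (simp add: g_def)
  then have "line_mset (2 * q + 1) g = repeat_mset q (line_mset 2 g) + line_mset 1 g"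
    by (rule line_mset_periodic)
  also have "\<dots> = add_mset 1 (repeat_mset q {#1, 3#})"
    by (simp add: g_def numeral_2_eq_2 numeral_3_eq_3 add_mset_commute)
  finally show ?thesis
    using assms line_mset_update[of "2 * t" "2 * q + 1" g 2]
    by (simp add: paired_row_def g_def[abs_def])
qed

lemma line_mset_paired_matrix_row:
  assumes "i div 2 \<le> q"
  shows "line_mset (2 * q + 1) (paired_matrix i) = add_mset 2 (repeat_mset q {#1, 3#})"
proof (cases "even i")
  case True
  then show ?thesis
    using line_mset_paired_row[OF assms] by (simp add: paired_matrix_def[abs_def])
next
  case False
  have "line_mset (2 * q + 1) (paired_matrix i) = image_mset (\<lambda>c. 4 - c) (line_mset (2 * q + 1) (paired_row (i div 2)))"
    using False line_mset_comp[where g = "\<lambda>c. 4 - c" and L = "2 * q + 1" and f = "paired_row (i div 2)"]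
    by (simp add: paired_matrix_def[abs_def] o_def)
  also have "\<dots> = image_mset (\<lambda>c. 4 - c) (add_mset 2 (repeat_mset q {#1, 3#}))"
    unfolding line_mset_paired_row[OF assms] ..
  also have "\<dots> = add_mset 2 (repeat_mset q {#1, 3#})"
    by (induction q) simp_all
  finally show ?thesis .
qed

lemma paired_matrix_col:
  shows "sum_mset (line_mset (2 * h) (\<lambda>i. paired_matrix i j)) = 4 * h"
    and "count (line_mset (2 * h) (\<lambda>i. paired_matrix i j)) 2 \<le> 2"
    and "a \<noteq> 2 \<Longrightarrow> count (line_mset (2 * h) (\<lambda>i. paired_matrix i j)) a \<le> h"
proof -
  have pair: "{#paired_matrix (2 * t) j, paired_matrix (2 * t + 1) j#} =
      (if j = 2 * t then {#2, 2#} else {#1, 3#})" for t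
    by (auto simp: paired_matrix_def paired_row_cases)
  have col: "line_mset (2 * h) (\<lambda>i. paired_matrix i j) = (\<Sum>t<h. if j = 2 * t then {#2, 2#} else {#1, 3#})"
    unfolding line_mset_pairs pair ..
  show "sum_mset (line_mset (2 * h) (\<lambda>i. paired_matrix i j)) = 4 * h"
    unfolding col by (induction h) simp_all
  have "count (line_mset (2 * h) (\<lambda>i. paired_matrix i j)) 2 \<le> (\<Sum>t<h. if t = j div 2 then 2 else 0)"
    unfolding col count_sum by (intro sum_mono) auto
  also have "\<dots> \<le> 2"
    by (simp add: sum.delta)
  finally show "count (line_mset (2 * h) (\<lambda>i. paired_matrix i j)) 2 \<le> 2" .
  show "count (line_mset (2 * h) (\<lambda>i. paired_matrix i j)) a \<le> h" if "a \<noteq> 2"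
  proof -
    have "count (line_mset (2 * h) (\<lambda>i. paired_matrix i j)) a \<le> (\<Sum>t<h. 1)"
      unfolding col count_sum using that by (intro sum_mono) auto
    then show ?thesis by simp
  qed
qed

lemma majority_nsd_matrix_paired:
  assumes "2 \<le> h" "h \<le> q + 1"
  shows "majority_nsd_matrix 3 (2 * h) (2 * q + 1) paired_matrix"
proof (rule majority_nsd_matrixI)
  fix i assume "i < 2 * h"
  then have row: "line_mset (2 * q + 1) (paired_matrix i) = add_mset 2 (repeat_mset q {#1, 3#})"
    using assms by (intro line_mset_paired_matrix_row) linarith
  show "set_mset (line_mset (2 * q + 1) (paired_matrix i)) \<subseteq> {1..3} \<and>
      majority_mset (line_mset (2 * q + 1) (paired_matrix i))"
    using assms unfolding row by (auto simp: majority_mset_def)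
  fix j
  show "sum_mset (line_mset (2 * q + 1) (paired_matrix i)) \<noteq> sum_mset (line_mset (2 * h) (\<lambda>i. paired_matrix i j))"
    unfolding row paired_matrix_col(1) by simp presburger
next
  fix j
  show "majority_mset (line_mset (2 * h) (\<lambda>i. paired_matrix i j))"
    unfolding majority_mset_def size_line_mset
  proof
    fix a
    show "2 * count (line_mset (2 * h) (\<lambda>i. paired_matrix i j)) a \<le> 2 * h"
      using paired_matrix_col(2,3)[where h = h and j = j] assms(1) by (cases "a = 2") fastforce+
  qed
qed

(* In p x p blocks this is [[3, 1 + I], [1, 3 - I]] with I the identity matrix:
   rows sum to 4p + 1 or 4p - 1, columns to 4p. *)

definition even_square_matrix :: "nat \<Rightarrow> nat \<Rightarrow> nat \<Rightarrow> nat" where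
  "even_square_matrix p i j =
     (if i < p then (if j < p then 3 else if j = p + i then 2 else 1)
      else (if j < p then 1 else if j = i then 2 else 3))"

lemma majority_nsd_matrix_even_square:
  assumes "2 \<le> p"
  shows "majority_nsd_matrix 3 (p + p) (p + p) (even_square_matrix p)"
proof -
  let ?E = "even_square_matrix p"
  have top: "line_mset (p + p) (?E i) = replicate_mset p 3 + add_mset 2 (replicate_mset (p - 1) 1)"
    if "i < p" for i
  proof -
    have "line_mset p (?E i) = replicate_mset p 3"
      using that by (intro line_mset_const) (simp add: even_square_matrix_def)
    moreover have "line_mset p (\<lambda>j. ?E i (p + j)) = add_mset 2 (replicate_mset (p - 1) 1)"
      using that by (intro line_mset_point[of i]) (auto simp: even_square_matrix_def)
    ultimately show ?thesis by (simp add: line_mset_add)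
  qed
  have bottom: "line_mset (p + p) (?E (p + i)) = replicate_mset p 1 + add_mset 2 (replicate_mset (p - 1) 3)"
    if "i < p" for i
  proof -
    have "line_mset p (?E (p + i)) = replicate_mset p 1"
      by (intro line_mset_const) (simp add: even_square_matrix_def)
    moreover have "line_mset p (\<lambda>j. ?E (p + i) (p + j)) = add_mset 2 (replicate_mset (p - 1) 3)"
      using that by (intro line_mset_point[of i]) (auto simp: even_square_matrix_def)
    ultimately show ?thesis by (simp add: line_mset_add)
  qed
  have left: "line_mset (p + p) (\<lambda>i. ?E i j) = replicate_mset p 3 + replicate_mset p 1"
    if "j < p" for j
  proof -
    have "line_mset p (\<lambda>i. ?E i j) = replicate_mset p 3"
      using that by (intro line_mset_const) (simp add: even_square_matrix_def)
    moreover have "line_mset p (\<lambda>i. ?E (p + i) j) = replicate_mset p 1"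
      using that by (intro line_mset_const) (simp add: even_square_matrix_def)
    ultimately show ?thesis by (simp add: line_mset_add)
  qed
  have right: "line_mset (p + p) (\<lambda>i. ?E i (p + j)) =
      add_mset 2 (replicate_mset (p - 1) 1) + add_mset 2 (replicate_mset (p - 1) 3)"
    if "j < p" for j
  proof -
    have "line_mset p (\<lambda>i. ?E i (p + j)) = add_mset 2 (replicate_mset (p - 1) 1)"
      using that by (intro line_mset_point[of j]) (auto simp: even_square_matrix_def)
    moreover have "line_mset p (\<lambda>i. ?E (p + i) (p + j)) = add_mset 2 (replicate_mset (p - 1) 3)"
      using that by (intro line_mset_point[of j]) (auto simp: even_square_matrix_def)
    ultimately show ?thesis by (simp add: line_mset_add)
  qed
  show ?thesis
  proof (rule majority_nsd_matrixI)
    fix i assume "i < p + p"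
    then show "set_mset (line_mset (p + p) (?E i)) \<subseteq> {1..3} \<and> majority_mset (line_mset (p + p) (?E i))"
      by (rule less_add_cases) (use assms top bottom in \<open>auto simp: majority_mset_def\<close>)
  next
    fix j assume "j < p + p"
    then show "majority_mset (line_mset (p + p) (\<lambda>i. ?E i j))"
      by (rule less_add_cases) (use assms left right in \<open>auto simp: majority_mset_def\<close>)
  next
    fix i j assume "i < p + p" "j < p + p"
    have "sum_mset (line_mset (p + p) (?E i)) \<in> {4 * p - 1, 4 * p + 1}"
      using \<open>i < p + p\<close> by (rule less_add_cases) (use assms top bottom in auto)
    moreover have "sum_mset (line_mset (p + p) (\<lambda>i. ?E i j)) = 4 * p"
      using \<open>j < p + p\<close> by (rule less_add_cases) (use assms left right in auto)
    ultimately show "sum_mset (line_mset (p + p) (?E i)) \<noteq> sum_mset (line_mset (p + p) (\<lambda>i. ?E i j))"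
      using assms by auto
  qed
qed

(* In blocks of sizes p, 1, p this is [[1, 3, 2 + I], [2, 1, 3], [2 + I, e, 1 + 2I]]
   with I the identity matrix and e = (1, 2, ..., 2). *)

definition odd_square_matrix :: "nat \<Rightarrow> nat \<Rightarrow> nat \<Rightarrow> nat" where
  "odd_square_matrix p i j =
     (if i < p then (if j < p then 1 else if j = p then 3 else if j = Suc p + i then 3 else 2)
      else if i = p then (if j < p then 2 else if j = p then 1 else 3)
      else if j < p then (if i = Suc p + j then 3 else 2)
      else if j = p then (if i = Suc p then 1 else 2)
      else if j = i then 3 else 1)"

lemma majority_nsd_matrix_odd_square:
  assumes "3 \<le> p"
  shows "majority_nsd_matrix 3 (p + Suc p) (p + Suc p) (odd_square_matrix p)"
proof -
  let ?O = "odd_square_matrix p"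
  have top: "line_mset (p + Suc p) (?O i) = replicate_mset p 1 + {#3, 3#} + replicate_mset (p - 1) 2"
    if "i < p" for i
  proof -
    have "line_mset p (?O i) = replicate_mset p 1"
      using that by (intro line_mset_const) (simp add: odd_square_matrix_def)
    moreover have "line_mset p (\<lambda>j. ?O i (Suc p + j)) = add_mset 3 (replicate_mset (p - 1) 2)"
      using that by (intro line_mset_point[of i]) (auto simp: odd_square_matrix_def)
    moreover have "?O i p = 3" using that by (simp add: odd_square_matrix_def)
    ultimately show ?thesis unfolding line_mset_add_Suc by simp
  qed
  have middle: "line_mset (p + Suc p) (?O p) = replicate_mset p 2 + add_mset 1 (replicate_mset p 3)"
  proof -
    have "line_mset p (?O p) = replicate_mset p 2"
      by (intro line_mset_const) (simp add: odd_square_matrix_def)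
    moreover have "line_mset p (\<lambda>j. ?O p (Suc p + j)) = replicate_mset p 3"
      by (intro line_mset_const) (simp add: odd_square_matrix_def)
    moreover have "?O p p = 1" by (simp add: odd_square_matrix_def)
    ultimately show ?thesis unfolding line_mset_add_Suc by simp
  qed
  have bottom: "line_mset (p + Suc p) (?O (Suc p + i)) =
      add_mset 3 (replicate_mset (p - 1) 2) + add_mset (if i = 0 then 1 else 2) (add_mset 3 (replicate_mset (p - 1) 1))"
    if "i < p" for i
  proof -
    have "line_mset p (?O (Suc p + i)) = add_mset 3 (replicate_mset (p - 1) 2)"
      using that by (intro line_mset_point[of i]) (auto simp: odd_square_matrix_def)
    moreover have "line_mset p (\<lambda>j. ?O (Suc p + i) (Suc p + j)) = add_mset 3 (replicate_mset (p - 1) 1)"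
      using that by (intro line_mset_point[of i]) (auto simp: odd_square_matrix_def)
    moreover have "?O (Suc p + i) p = (if i = 0 then 1 else 2)" by (simp add: odd_square_matrix_def)
    ultimately show ?thesis unfolding line_mset_add_Suc by simp
  qed
  have left: "line_mset (p + Suc p) (\<lambda>i. ?O i j) = replicate_mset p 1 + add_mset 2 (add_mset 3 (replicate_mset (p - 1) 2))"
    if "j < p" for j
  proof -
    have "line_mset p (\<lambda>i. ?O i j) = replicate_mset p 1"
      using that by (intro line_mset_const) (simp add: odd_square_matrix_def)
    moreover have "line_mset p (\<lambda>i. ?O (Suc p + i) j) = add_mset 3 (replicate_mset (p - 1) 2)"
      using that by (intro line_mset_point[of j]) (auto simp: odd_square_matrix_def)
    moreover have "?O p j = 2" using that by (simp add: odd_square_matrix_def)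
    ultimately show ?thesis unfolding line_mset_add_Suc by simp
  qed
  have centre: "line_mset (p + Suc p) (\<lambda>i. ?O i p) = replicate_mset p 3 + {#1, 1#} + replicate_mset (p - 1) 2"
  proof -
    have "line_mset p (\<lambda>i. ?O i p) = replicate_mset p 3"
      by (intro line_mset_const) (simp add: odd_square_matrix_def)
    moreover have "line_mset p (\<lambda>i. ?O (Suc p + i) p) = add_mset 1 (replicate_mset (p - 1) 2)"
      using assms by (intro line_mset_point[of 0]) (auto simp: odd_square_matrix_def)
    moreover have "?O p p = 1" by (simp add: odd_square_matrix_def)
    ultimately show ?thesis unfolding line_mset_add_Suc by simp
  qed
  have right: "line_mset (p + Suc p) (\<lambda>i. ?O i (Suc p + j)) =
      add_mset 3 (replicate_mset (p - 1) 2) + add_mset 3 (add_mset 3 (replicate_mset (p - 1) 1))"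
    if "j < p" for j
  proof -
    have "line_mset p (\<lambda>i. ?O i (Suc p + j)) = add_mset 3 (replicate_mset (p - 1) 2)"
      using that by (intro line_mset_point[of j]) (auto simp: odd_square_matrix_def)
    moreover have "line_mset p (\<lambda>i. ?O (Suc p + i) (Suc p + j)) = add_mset 3 (replicate_mset (p - 1) 1)"
      using that by (intro line_mset_point[of j]) (auto simp: odd_square_matrix_def)
    moreover have "?O p (Suc p + j) = 3" by (simp add: odd_square_matrix_def)
    ultimately show ?thesis unfolding line_mset_add_Suc by simp
  qed
  show ?thesis
  proof (rule majority_nsd_matrixI)
    fix i assume "i < p + Suc p"
    then show "set_mset (line_mset (p + Suc p) (?O i)) \<subseteq> {1..3} \<and> majority_mset (line_mset (p + Suc p) (?O i))"
      by (rule less_add_Suc_cases) (use assms top middle bottom in \<open>auto simp: majority_mset_def\<close>)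
  next
    fix j assume "j < p + Suc p"
    then show "majority_mset (line_mset (p + Suc p) (\<lambda>i. ?O i j))"
      by (rule less_add_Suc_cases) (use assms left centre right in \<open>auto simp: majority_mset_def\<close>)
  next
    fix i j assume "i < p + Suc p" "j < p + Suc p"
    have "sum_mset (line_mset (p + Suc p) (?O i)) \<in> {3 * p + 4, 5 * p + 1, 3 * p + 5}"
      using \<open>i < p + Suc p\<close> by (rule less_add_Suc_cases) (use assms top middle bottom in auto)
    moreover have "sum_mset (line_mset (p + Suc p) (\<lambda>i. ?O i j)) \<in> {3 * p + 3, 5 * p, 3 * p + 6}"
      using \<open>j < p + Suc p\<close> by (rule less_add_Suc_cases) (use assms left centre right in auto)
    moreover have "x \<noteq> y" if "x \<in> {3 * p + 4, 5 * p + 1, 3 * p + 5}" "y \<in> {3 * p + 3, 5 * p, 3 * p + 6}" for x y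
      using that assms by auto presburger+
    ultimately show "sum_mset (line_mset (p + Suc p) (?O i)) \<noteq> sum_mset (line_mset (p + Suc p) (\<lambda>i. ?O i j))"
      by blast
  qed
qed

definition majority_nsd_check :: "nat \<Rightarrow> nat \<Rightarrow> nat \<Rightarrow> (nat \<Rightarrow> nat \<Rightarrow> nat) \<Rightarrow> bool" where
  "majority_nsd_check k n m M \<longleftrightarrow>
     (\<forall>i\<in>set [0..<n]. \<forall>j\<in>set [0..<m]. 1 \<le> M i j \<and> M i j \<le> k) \<and>
     (\<forall>i\<in>set [0..<n]. \<forall>a\<in>set [1..<Suc k]. 2 * count_list (map (M i) [0..<m]) a \<le> m) \<and>
     (\<forall>j\<in>set [0..<m]. \<forall>a\<in>set [1..<Suc k]. 2 * count_list (map (\<lambda>i. M i j) [0..<n]) a \<le> n) \<and>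
     (\<forall>i\<in>set [0..<n]. \<forall>j\<in>set [0..<m]. sum_list (map (M i) [0..<m]) \<noteq> sum_list (map (\<lambda>i. M i j) [0..<n]))"

lemma majority_nsd_check_sound:
  assumes "majority_nsd_check k n m M"
  shows "majority_nsd_matrix k n m M"
proof (rule majority_nsd_matrixI)
  note check = assms[unfolded majority_nsd_check_def set_upt atLeastLessThanSuc_atLeastAtMost
      count_line_mset_list[symmetric] sum_mset_line_mset_list[symmetric]]
  fix i assume "i < n"
  then have i: "i \<in> {0..<n}" by simp
  have row: "set_mset (line_mset m (M i)) \<subseteq> {1..k}"
    using check i by auto
  moreover have "majority_mset (line_mset m (M i))"
    unfolding majority_mset_iff_colours[OF row] using check i by simp
  ultimately show "set_mset (line_mset m (M i)) \<subseteq> {1..k} \<and> majority_mset (line_mset m (M i))" ..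
  fix j assume "j < m"
  then have j: "j \<in> {0..<m}" by simp
  show "sum_mset (line_mset m (M i)) \<noteq> sum_mset (line_mset n (\<lambda>i. M i j))"
    using check i j by blast
next
  note check = assms[unfolded majority_nsd_check_def set_upt atLeastLessThanSuc_atLeastAtMost
      count_line_mset_list[symmetric] sum_mset_line_mset_list[symmetric]]
  fix j assume "j < m"
  then have j: "j \<in> {0..<m}" by simp
  have col: "set_mset (line_mset n (\<lambda>i. M i j)) \<subseteq> {1..k}"
    using check j by auto
  show "majority_mset (line_mset n (\<lambda>i. M i j))"
    unfolding majority_mset_iff_colours[OF col] using check j by simp
qed

lemma majority_nsd_matrix_2_2: "majority_nsd_matrix 4 2 2 (\<lambda>i j. [[1, 2], [3, 4]] ! i ! j)"
  by (rule majority_nsd_check_sound) code_simp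

lemma majority_nsd_matrix_2_3: "majority_nsd_matrix 3 2 3 (\<lambda>i j. [[1, 2, 3], [2, 3, 1]] ! i ! j)"
  by (rule majority_nsd_check_sound) code_simp

lemma majority_nsd_matrix_3_3: "majority_nsd_matrix 5 3 3 (\<lambda>i j. [[1, 2, 3], [2, 3, 5], [5, 4, 1]] ! i ! j)"
  by (rule majority_nsd_check_sound) code_simp

lemma majority_nsd_matrix_5_5:
  "majority_nsd_matrix 4 5 5 (\<lambda>i j. [[3, 1, 2, 4, 4], [4, 4, 3, 2, 1], [3, 1, 4, 3, 4], [4, 3, 2, 3, 2],
     [2, 3, 1, 4, 1]] ! i ! j)"
  by (rule majority_nsd_check_sound) code_simp

lemma ex_majority_nsd_matrix_3_even_square:
  assumes "even n" "4 \<le> n"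
  shows "\<exists>M. majority_nsd_matrix 3 n n M"
proof -
  have "2 \<le> n div 2" "n = n div 2 + n div 2" using assms by presburger+
  then show ?thesis using majority_nsd_matrix_even_square by metis
qed

lemma ex_majority_nsd_matrix_3_even_odd:
  assumes "even n" "2 \<le> n" "2 \<le> m" "m = n + 1 \<or> n = m + 1"
  shows "\<exists>M. majority_nsd_matrix 3 n m M"
proof (cases "n = 2")
  case True
  then have "m = 3" using assms(3,4) by auto
  then show ?thesis using True majority_nsd_matrix_2_3 by blast
next
  case False
  then have "2 \<le> n div 2" "n div 2 \<le> m div 2 + 1" using assms by presburger+
  moreover have "n = 2 * (n div 2)" "m = 2 * (m div 2) + 1" using assms by presburger+
  ultimately show ?thesis using majority_nsd_matrix_paired by metis
qed

lemma ex_majority_nsd_matrix_3: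
  assumes "2 \<le> n" "2 \<le> m" "odd n \<or> odd m" "\<not> (n = 3 \<and> m = 3)" "\<not> (n = 5 \<and> m = 5)"
  shows "\<exists>M. majority_nsd_matrix 3 n m M"
proof -
  consider "n = m" | "n + 2 \<le> m \<or> m + 2 \<le> n" | "m = n + 1 \<or> n = m + 1"
    by linarith
  then show ?thesis
  proof cases
    case 1
    then have "3 \<le> n div 2" "n = n div 2 + Suc (n div 2)" "m = n"
      using assms by presburger+
    then show ?thesis using majority_nsd_matrix_odd_square by metis
  next
    case 2
    then show ?thesis using majority_nsd_matrix_cyclic_3 assms(1,2) by blast
  next
    case 3
    show ?thesis
    proof (cases "even n")
      case True
      then show ?thesis using ex_majority_nsd_matrix_3_even_odd assms(1,2) 3 by blast
    next
      case False
      then have "even m" using 3 by presburger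
      then obtain M where "majority_nsd_matrix 3 m n M"
        using ex_majority_nsd_matrix_3_even_odd assms(1,2) 3 by blast
      then show ?thesis using majority_nsd_matrix_transpose by blast
    qed
  qed
qed

theorem mainTheorem9:
  fixes n m :: nat
  assumes "n > 0" and "m > 0"
  shows "(even n \<and> even m \<longrightarrow>
            (n = 2 \<and> m = 2 \<longrightarrow> chi_mSigma (Knm_V n m) Knm_E = 4) \<and>
            (n = m \<and> n \<ge> 4 \<longrightarrow> chi_mSigma (Knm_V n m) Knm_E = 3) \<and>
            (n \<noteq> m \<longrightarrow> chi_mSigma (Knm_V n m) Knm_E = 2)) \<and>
         ((odd n \<or> odd m) \<and> n \<ge> 2 \<and> m \<ge> 2 \<longrightarrow>
            (n = 3 \<and> m = 3 \<longrightarrow> chi_mSigma (Knm_V n m) Knm_E = 5) \<and>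
            (n = 5 \<and> m = 5 \<longrightarrow> chi_mSigma (Knm_V n m) Knm_E = 4) \<and>
            (\<not> (n = 3 \<and> m = 3) \<and> \<not> (n = 5 \<and> m = 5) \<longrightarrow> chi_mSigma (Knm_V n m) Knm_E = 3))"
proof (intro conjI impI)
  assume "n = 2 \<and> m = 2"
  then show "chi_mSigma (Knm_V n m) Knm_E = 4"
    using chi_mSigma_Knm_eqI[OF majority_nsd_matrix_2_2]
      no_majority_nsd_matrix_deficient[of 2 3 1] by simp
next
  assume "n = m \<and> 4 \<le> n" "even n \<and> even m"
  then show "chi_mSigma (Knm_V n m) Knm_E = 3"
    using ex_majority_nsd_matrix_3_even_square[of n] chi_mSigma_Knm_eqI[of 3 n m]
      majority_nsd_matrix_2_dims by fastforce
next
  assume "n \<noteq> m" "even n \<and> even m"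
  then show "chi_mSigma (Knm_V n m) Knm_E = 2"
    using chi_mSigma_Knm_eqI[OF majority_nsd_matrix_cyclic_2]
      no_majority_nsd_matrix_1 assms by simp
next
  assume "n = 3 \<and> m = 3"
  then show "chi_mSigma (Knm_V n m) Knm_E = 5"
    using chi_mSigma_Knm_eqI[OF majority_nsd_matrix_3_3]
      no_majority_nsd_matrix_deficient[of 3 4 1] by simp
next
  assume "n = 5 \<and> m = 5"
  then show "chi_mSigma (Knm_V n m) Knm_E = 4"
    using chi_mSigma_Knm_eqI[OF majority_nsd_matrix_5_5]
      no_majority_nsd_matrix_deficient[of 5 3 2] by simp
next
  assume "(odd n \<or> odd m) \<and> 2 \<le> n \<and> 2 \<le> m" "\<not> (n = 3 \<and> m = 3) \<and> \<not> (n = 5 \<and> m = 5)"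
  then show "chi_mSigma (Knm_V n m) Knm_E = 3"
    using ex_majority_nsd_matrix_3[of n m] chi_mSigma_Knm_eqI[of 3 n m]
      majority_nsd_matrix_2_dims assms by fastforce
qed

end
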